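(* Let $G$ be a connected graph with $13$ vertices. Suppose one of the following holds: (1) $\Delta(G)=12$ and $e(G)=13+k$ for some $1\le k\le 10$; (2) $\Delta(G)=11$ and $e(G)=13+k$ for some $5\le k\le 10$; (3) $\Delta(G)=10$ and $e(G)=13+k$ for some $8\le k\le 10$. Then $R(G)>\sqrt{12}+\frac{2(k+1)}{13\sqrt{12}}$.
   Context: All graphs are finite and simple; $e(G)$ is the number of edges and $\Delta(G)$ the maximum degree. For a vertex $u$, $d(u)$ is its degree. The Randić index is $R(G)=\sum_{\{u,v\}\in E(G)} \frac{1}{\sqrt{d(u)d(v)}}$. *)

theory Defs
  imports Complex_Main
begin

definition simple_graph :: "'a set \<Rightarrow> 'a set set \<Rightarrow> bool" where
  "simple_graph V E \<longleftrightarrow> finite V \<and> (\<forall>e\<in>E. e \<subseteq> V \<and> card e = 2)"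

definition degree :: "'a set set \<Rightarrow> 'a \<Rightarrow> nat" where
  "degree E v = card {e \<in> E. v \<in> e}"

definition max_degree :: "'a set \<Rightarrow> 'a set set \<Rightarrow> nat" where
  "max_degree V E = Max (degree E ` V)"

definition adj_rel :: "'a set set \<Rightarrow> ('a \<times> 'a) set" where
  "adj_rel E = {(x, y). {x, y} \<in> E}"

definition connected_graph :: "'a set \<Rightarrow> 'a set set \<Rightarrow> bool" where
  "connected_graph V E \<longleftrightarrow> V \<noteq> {} \<and> (\<forall>u\<in>V. \<forall>v\<in>V. (u, v) \<in> (adj_rel E)\<^sup>*)"

definition randic :: "'a set set \<Rightarrow> real" where
  "randic E = (\<Sum>e\<in>E. 1 / sqrt (\<Prod>v\<in>e. real (degree E v)))"

end

theory Submission
  imports Defs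
begin

text \<open>For degrees in \<open>{1..12}\<close> the weight \<open>1/\<surd>(d(u) d(v))\<close> of an edge dominates the affine
  expression \<open>\<alpha> (1/d(u) + 1/d(v)) + \<beta>\<close> with \<open>\<alpha> = 28/125\<close>, \<open>\<beta> = 23/500\<close>. Summed over the edges,
  the terms \<open>1/d\<close> add up to one per vertex, so \<open>R(G) \<ge> 13 \<alpha> + (13 + k) \<beta> = 351/100 + 23 k/500\<close>,
  and this exceeds the claimed bound for every \<open>k \<ge> 0\<close> because \<open>23/500 > 2/(13 \<surd>12)\<close>.
  Of the three cases of the hypothesis only \<open>\<Delta>(G) \<le> 12\<close> is needed.\<close>

lemma affine_le_inverse_sqrt_mult:
  fixes a b :: nat
  assumes "1 \<le> a" "a \<le> 12" "1 \<le> b" "b \<le> 12"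
  shows "28/125 * (1 / real a + 1 / real b) + 23/500 \<le> 1 / sqrt (real a * real b)"
proof -
  \<comment> \<open>the claim squared and multiplied by \<open>(500 a b)\<^sup>2\<close>, checked on all 144 pairs\<close>
  have "(112 * (a + b) + 23 * a * b)^2 \<le> 250000 * a * b"
  proof -
    have "a \<in> set [1..<13]" "b \<in> set [1..<13]" using assms by auto
    then show ?thesis by (simp add: upt_rec) (elim disjE; simp)
  qed
  then have "real ((112 * (a + b) + 23 * a * b)^2) \<le> real (250000 * a * b)"
    by (simp only: of_nat_le_iff)
  then have "(112 * (real a + real b) + 23 * real a * real b)^2 \<le> 250000 * real a * real b"
    by simp
  then have "((112 * (real a + real b) + 23 * real a * real b) / 500)^2 \<le> real a * real b"
    by (simp add: power_divide)
  then have bound: "(112 * (real a + real b) + 23 * real a * real b) / 500 \<le> sqrt (real a * real b)"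
    using real_le_rsqrt by blast
  have "real a > 0" "real b > 0" using assms by simp_all
  then have pos: "real a * real b > 0" by simp
  have "28/125 * (1 / real a + 1 / real b) + 23/500
      = (112 * (real a + real b) + 23 * real a * real b) / 500 / (real a * real b)"
    using \<open>real a > 0\<close> \<open>real b > 0\<close> by (simp add: field_simps)
  also have "\<dots> \<le> sqrt (real a * real b) / (real a * real b)"
    by (rule divide_right_mono[OF bound]) (use pos in simp)
  also have "\<dots> = 1 / sqrt (real a * real b)"
    using pos by (simp add: sqrt_divide_self_eq inverse_eq_divide)
  finally show ?thesis .
qed

lemma simple_graph_finite_edges: "simple_graph V E \<Longrightarrow> finite E"
  unfolding simple_graph_def by (auto intro: finite_subset[of E "Pow V"])

lemma degree_le_max_degree: "finite V \<Longrightarrow> v \<in> V \<Longrightarrow> degree E v \<le> max_degree V E"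
  unfolding max_degree_def by simp

lemma degree_pos_if_in_edge: "finite E \<Longrightarrow> e \<in> E \<Longrightarrow> v \<in> e \<Longrightarrow> 0 < degree E v"
  unfolding degree_def by (auto simp: card_gt_0_iff)

lemma connected_graph_degree_pos:
  assumes "simple_graph V E" "connected_graph V E" "2 \<le> card V" "v \<in> V"
  shows "0 < degree E v"
proof -
  have "card (V - {v}) \<ge> 1" using assms(3,4) by (simp add: card_Diff_singleton)
  then have "V - {v} \<noteq> {}" by (cases "V - {v} = {}") simp_all
  then obtain u where "u \<in> V" "u \<noteq> v" by blast
  then have "(v, u) \<in> (adj_rel E)\<^sup>*"
    using assms(2,4) unfolding connected_graph_def by blast
  then obtain w where "(v, w) \<in> adj_rel E"
    using \<open>u \<noteq> v\<close> by (blast elim: converse_rtranclE)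
  then have "{v, w} \<in> E" unfolding adj_rel_def by simp
  then show ?thesis
    using degree_pos_if_in_edge[OF simple_graph_finite_edges[OF assms(1)]] by simp
qed

lemma sum_edges_inverse_degrees:
  assumes "simple_graph V E" and no_isolated: "\<And>v. v \<in> V \<Longrightarrow> 0 < degree E v"
  shows "(\<Sum>e\<in>E. \<Sum>v\<in>e. 1 / real (degree E v)) = card V"
proof -
  have finV: "finite V" and sub: "\<And>e. e \<in> E \<Longrightarrow> e \<subseteq> V"
    using assms(1) unfolding simple_graph_def by auto
  have "(\<Sum>e\<in>E. \<Sum>v\<in>e. 1 / real (degree E v))
      = (\<Sum>e\<in>E. \<Sum>v\<in>{v\<in>V. v \<in> e}. 1 / real (degree E v))"
    using sub by (intro sum.cong refl) blast
  also have "\<dots> = (\<Sum>v\<in>V. \<Sum>e\<in>{e\<in>E. v \<in> e}. 1 / real (degree E v))"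
    using simple_graph_finite_edges[OF assms(1)] finV by (rule sum.swap_restrict)
  also have "\<dots> = (\<Sum>v\<in>V. 1)"
    using no_isolated by (intro sum.cong) (auto simp: degree_def[symmetric])
  finally show ?thesis by simp
qed

lemma randic_ge_affine:
  assumes "simple_graph V E"
    and no_isolated: "\<And>v. v \<in> V \<Longrightarrow> 0 < degree E v"
    and degree_le: "\<And>v. v \<in> V \<Longrightarrow> degree E v \<le> 12"
  shows "28/125 * card V + 23/500 * card E \<le> randic E"
proof -
  define f :: "'a set \<Rightarrow> real" where
    "f e = 28/125 * (\<Sum>v\<in>e. 1 / real (degree E v)) + 23/500" for e
  have "f e \<le> 1 / sqrt (\<Prod>v\<in>e. real (degree E v))" if "e \<in> E" for e
  proof -
    have "e \<subseteq> V" "card e = 2"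
      using assms(1) \<open>e \<in> E\<close> unfolding simple_graph_def by auto
    then obtain u w where e: "e = {u, w}" "u \<noteq> w" "u \<in> V" "w \<in> V"
      by (auto simp: card_2_iff)
    have "1 \<le> degree E u" "1 \<le> degree E w"
      using no_isolated e(3,4) by (simp_all add: Suc_le_eq)
    then show ?thesis
      using affine_le_inverse_sqrt_mult degree_le e by (simp add: f_def)
  qed
  then have "sum f E \<le> randic E"
    unfolding randic_def by (rule sum_mono)
  moreover have "sum f E = 28/125 * card V + 23/500 * card E"
    unfolding f_def sum.distrib sum_distrib_left[symmetric]
    using sum_edges_inverse_degrees[OF assms(1) no_isolated] by simp
  ultimately show ?thesis by simp
qed

lemma sqrt_12_bound:
  fixes t :: real
  assumes "0 \<le> t"
  shows "sqrt 12 + 2 * (t + 1) / (13 * sqrt 12) < 351/100 + 23/500 * t"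
proof -
  define x where "x = sqrt (12::real)"
  have x_sq: "x * x = 12" unfolding x_def by simp
  have x_gt: "x > 34641/10000"
    unfolding x_def by (rule real_less_rsqrt) (simp add: power2_eq_square)
  have "34641/10000 * t \<le> x * t" using x_gt assms by (intro mult_right_mono) simp_all
  then have "2 * (t + 1) < (351/100 + 23/500 * t - x) * (13 * x)"
    using x_gt x_sq assms by (simp add: algebra_simps)
  then have "2 * (t + 1) / (13 * x) < 351/100 + 23/500 * t - x"
    using x_gt by (simp add: pos_divide_less_eq)
  then show ?thesis unfolding x_def by simp
qed

theorem lemma3p7:
  fixes V :: "'a set" and E :: "'a set set" and k :: nat
  assumes "simple_graph V E" and "connected_graph V E" and "card V = 13"
    and "card E = 13 + k"
    and "(max_degree V E = 12 \<and> 1 \<le> k \<and> k \<le> 10) \<or>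
         (max_degree V E = 11 \<and> 5 \<le> k \<and> k \<le> 10) \<or>
         (max_degree V E = 10 \<and> 8 \<le> k \<and> k \<le> 10)"
  shows "randic E > sqrt 12 + 2 * (real k + 1) / (13 * sqrt 12)"
proof -
  have "finite V" using assms(1) unfolding simple_graph_def by simp
  moreover have "max_degree V E \<le> 12" using assms(5) by auto
  ultimately have "degree E v \<le> 12" if "v \<in> V" for v
    using degree_le_max_degree[of V v E] that by simp
  moreover have "0 < degree E v" if "v \<in> V" for v
    using connected_graph_degree_pos[OF assms(1,2) _ that] assms(3) by simp
  ultimately have "28/125 * card V + 23/500 * card E \<le> randic E"
    using randic_ge_affine[OF assms(1)] by blast
  then have "351/100 + 23/500 * real k \<le> randic E"
    using assms(3,4) by (simp add: field_simps)
  then show ?thesis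
    using sqrt_12_bound[of "real k"] by simp
qed

end
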